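(* Let $p$ be a prime, $n \in \mathbb{N}$, and let $v \in \mathbb{Z}_p^n$ with $|v| \ge 2^{18} \log p$. There exists $Y \subset [n]$ with $n/4 \le |Y| \le n/2$ such that $$|v_Y| \ge \frac{|v|}{4} \qquad \text{and} \qquad T_\ell(v_Y) \subset T_{8\ell}(v),$$ where $\ell := 2^{-16} |v|$.
   Context: $\log$ is the natural logarithm. For $w \in \mathbb{Z}_p^m$, $|w|$ is the number of nonzero coordinates of $w$, and for $t \ge 0$ $$T_t(w) := \Big\{ k \in \mathbb{Z}_p : \sum_{i=1}^m \Big\| \frac{k \cdot w_i}{p} \Big\|^2 \le t \Big\},$$ where $k \cdot w_i \in \mathbb{Z}$ is the product of the representatives of $k$ and $w_i$ in $\{0,\ldots,p-1\}$, and $\|x\|$ is the distance from $x$ to the nearest integer. For $Y \subset [n]$, $v_Y \in \mathbb{Z}_p^{|Y|}$ is the restriction of $v$ to the coordinates in $Y$ (so $T_\ell(v_Y)$ sums only over $i \in Y$). *)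

theory Defs
  imports "HOL-Analysis.Analysis"
begin

text \<open>Elements of Z_p are represented by their representatives in {0..<p};
  a vector v in Z_p^n is a function nat => nat with v i < p for i < n,
  coordinates indexed by {0..<n}.\<close>

definition dist_int :: "real \<Rightarrow> real" where
  "dist_int x = \<bar>x - of_int (round x)\<bar>"

definition supp_size :: "(nat \<Rightarrow> nat) \<Rightarrow> nat set \<Rightarrow> nat" where
  "supp_size v I = card {i \<in> I. v i \<noteq> 0}"

definition Tset :: "nat \<Rightarrow> real \<Rightarrow> (nat \<Rightarrow> nat) \<Rightarrow> nat set \<Rightarrow> nat set" where
  "Tset p t v I = {k \<in> {0..<p}. (\<Sum>i\<in>I. (dist_int (real (k * v i) / real p))\<^sup>2) \<le> t}"

end

theory Submission
  imports Defs
begin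

text \<open>Order the coordinates so that the support of v comes first, cut the list into
  consecutive pairs, and let Y contain one coordinate of each pair. Whatever the choices,
  |Y| = n div 2 and Y meets the support in at least |v| div 2 coordinates. Fix k with
  S(v) = (\<Sum>i. ||k v_i / p||^2) > 8 l. Since exp(-a) + exp(-b) \<le> 2 exp(-(a + b)/4) for
  a, b in [0,1], the average of exp(-S(v_Y)) over the choices is at most exp(-(S(v) - 1)/4),
  so by Markov's inequality at most a fraction exp(1/4 - l) \<le> exp(1/4) / p^4 of the choices
  have S(v_Y) \<le> l. A union bound over the p values of k leaves a choice with
  T_l(v_Y) \<subseteq> T_8l(v).\<close>

lemma exp_neg_le_one_minus_half:
  fixes x :: real
  assumes "0 \<le> x" "x \<le> 1"
  shows "exp (- x) \<le> 1 - x / 2"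
proof -
  have "1 \<le> (1 - x / 2) * (1 + x)"
    using assms by (simp add: algebra_simps) (simp add: mult_left_le_one_le)
  also have "\<dots> \<le> (1 - x / 2) * exp x"
    using assms exp_ge_add_one_self by (intro mult_left_mono) auto
  finally show ?thesis by (simp add: exp_minus field_simps)
qed

lemma exp_neg_add_exp_neg_le:
  fixes a b :: real
  assumes "0 \<le> a" "a \<le> 1" "0 \<le> b" "b \<le> 1"
  shows "exp (- a) + exp (- b) \<le> 2 * exp (- (a + b) / 4)"
proof -
  have "exp (- a) + exp (- b) \<le> 2 * (1 + - (a + b) / 4)"
    using exp_neg_le_one_minus_half[of a] exp_neg_le_one_minus_half[of b] assms
    by (simp add: field_simps)
  also have "\<dots> \<le> 2 * exp (- (a + b) / 4)"
    by (intro mult_left_mono) simp_all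
  finally show ?thesis .
qed

lemma sum_exp_neg_choice_sums:
  fixes a b :: "nat \<Rightarrow> real"
  shows "(\<Sum>D\<in>Pow {..<m}. exp (- (\<Sum>j<m. if j \<in> D then b j else a j)))
       = (\<Prod>j<m. exp (- b j) + exp (- a j))"
proof -
  have "exp (- (\<Sum>j<m. if j \<in> D then b j else a j))
      = (\<Prod>j\<in>D. exp (- b j)) * (\<Prod>j\<in>{..<m} - D. exp (- a j))" if "D \<subseteq> {..<m}" for D
  proof -
    have "- (\<Sum>j<m. if j \<in> D then b j else a j)
        = (\<Sum>j\<in>D. - b j) + (\<Sum>j\<in>{..<m} - D. - a j)"
      using that by (simp add: sum.If_cases Int_absorb1 Diff_eq sum_negf)
    moreover have "finite D" using that finite_subset by blast
    ultimately show ?thesis by (simp add: exp_add exp_sum)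
  qed
  then have "(\<Sum>D\<in>Pow {..<m}. exp (- (\<Sum>j<m. if j \<in> D then b j else a j)))
      = (\<Sum>D\<in>Pow {..<m}. (\<Prod>j\<in>D. exp (- b j)) * (\<Prod>j\<in>{..<m} - D. exp (- a j)))"
    by (intro sum.cong) auto
  also have "\<dots> = (\<Prod>j<m. exp (- b j) + exp (- a j))"
    by (rule prod_add[symmetric]) simp
  finally show ?thesis .
qed

lemma card_low_choice_sums_le:
  fixes a b :: "nat \<Rightarrow> real"
  assumes "\<And>j. j < m \<Longrightarrow> 0 \<le> a j \<and> a j \<le> 1 \<and> 0 \<le> b j \<and> b j \<le> 1"
  shows "real (card {D \<in> Pow {..<m}. (\<Sum>j<m. if j \<in> D then b j else a j) \<le> t})
     \<le> 2 ^ m * exp (t - (\<Sum>j<m. a j + b j) / 4)"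
proof -
  define S where "S D = (\<Sum>j<m. if j \<in> D then b j else a j)" for D
  define B where "B = {D \<in> Pow {..<m}. S D \<le> t}"
  have "real (card B) * exp (- t) = (\<Sum>D\<in>B. exp (- t))" by simp
  also have "\<dots> \<le> (\<Sum>D\<in>B. exp (- S D))" by (rule sum_mono) (auto simp: B_def)
  also have "\<dots> \<le> (\<Sum>D\<in>Pow {..<m}. exp (- S D))" by (rule sum_mono2) (auto simp: B_def)
  also have "\<dots> = (\<Prod>j<m. exp (- b j) + exp (- a j))"
    unfolding S_def by (rule sum_exp_neg_choice_sums)
  also have "\<dots> \<le> (\<Prod>j<m. 2 * exp (- (a j + b j) / 4))"
    using assms exp_neg_add_exp_neg_le by (intro prod_mono) (simp add: add.commute)
  also have "\<dots> = 2 ^ m * exp (- (\<Sum>j<m. a j + b j) / 4)"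
    by (simp add: prod.distrib sum_negf sum.distrib sum_subtractf
        flip: exp_sum sum_divide_distrib)
  finally have "real (card B) * exp (- t) \<le> 2 ^ m * exp (- (\<Sum>j<m. a j + b j) / 4)" .
  then have "real (card B) \<le> 2 ^ m * (exp t * exp (- (\<Sum>j<m. a j + b j) / 4))"
    by (simp add: exp_minus field_simps)
  then show ?thesis
    unfolding B_def S_def by (simp flip: exp_add)
qed

text \<open>The entries L ! (2 * j) and L ! (2 * j + 1) form the j-th pair and D selects the second
  entry of the pairs it contains; the last entry of an odd-length list is never chosen.\<close>
definition pair_choice :: "'a list \<Rightarrow> nat set \<Rightarrow> 'a set" where
  "pair_choice L D = (\<lambda>j. L ! (2 * j + of_bool (j \<in> D))) ` {..<length L div 2}"

lemma pair_choice_subset: "pair_choice L D \<subseteq> set L"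
  unfolding pair_choice_def by auto

lemma inj_on_pair_choice_index:
  assumes "distinct L"
  shows "inj_on (\<lambda>j. L ! (2 * j + of_bool (j \<in> D))) {..<length L div 2}"
proof
  fix i j assume "i \<in> {..<length L div 2}" "j \<in> {..<length L div 2}"
    and eq: "L ! (2 * i + of_bool (i \<in> D)) = L ! (2 * j + of_bool (j \<in> D))"
  then have "2 * i + of_bool (i \<in> D) < length L" "2 * j + of_bool (j \<in> D) < length L"
    by auto
  then have "2 * i + of_bool (i \<in> D) = 2 * j + of_bool (j \<in> D)"
    using assms eq nth_eq_iff_index_eq by blast
  then show "i = j" by (cases "i \<in> D"; cases "j \<in> D") auto
qed

lemma card_pair_choice:
  assumes "distinct L"
  shows "card (pair_choice L D) = length L div 2"
  unfolding pair_choice_def using card_image[OF inj_on_pair_choice_index[OF assms]] by simp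

lemma sum_pair_choice:
  assumes "distinct L"
  shows "(\<Sum>i\<in>pair_choice L D. f i)
       = (\<Sum>j<length L div 2. if j \<in> D then f (L ! (2 * j + 1)) else f (L ! (2 * j)))"
proof -
  have "(\<Sum>i\<in>pair_choice L D. f i) = (\<Sum>j<length L div 2. f (L ! (2 * j + of_bool (j \<in> D))))"
    unfolding pair_choice_def using sum.reindex[OF inj_on_pair_choice_index[OF assms]] by simp
  also have "\<dots> = (\<Sum>j<length L div 2. if j \<in> D then f (L ! (2 * j + 1)) else f (L ! (2 * j)))"
    by (intro sum.cong) auto
  finally show ?thesis .
qed

lemma card_pair_choice_inter_take:
  assumes "distinct L" "r \<le> length L"
  shows "r div 2 \<le> card (pair_choice L D \<inter> set (take r L))"
proof -
  let ?pick = "\<lambda>j. L ! (2 * j + of_bool (j \<in> D))"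
  have "?pick j \<in> pair_choice L D \<inter> set (take r L)" if "j < r div 2" for j
  proof -
    have "2 * j + of_bool (j \<in> D) < r" using that by auto
    then have "take r L ! (2 * j + of_bool (j \<in> D)) \<in> set (take r L)"
      using assms(2) by (intro nth_mem) simp
    then show ?thesis
      using that assms(2) nth_take[OF \<open>2 * j + of_bool (j \<in> D) < r\<close>, of L]
      unfolding pair_choice_def by (intro IntI image_eqI[OF refl]) auto
  qed
  then have "card (?pick ` {..<r div 2}) \<le> card (pair_choice L D \<inter> set (take r L))"
    by (intro card_mono) auto
  moreover have "inj_on ?pick {..<r div 2}"
    by (rule inj_on_subset[OF inj_on_pair_choice_index[OF assms(1)]]) (use assms(2) in auto)
  ultimately show ?thesis by (simp add: card_image)
qed

lemma sum_lessThan_double_in_pairs: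
  fixes g :: "nat \<Rightarrow> 'a::comm_monoid_add"
  shows "(\<Sum>i<2 * m. g i) = (\<Sum>j<m. g (2 * j) + g (2 * j + 1))"
  by (induction m) (simp_all add: mult_2 add.assoc)

lemma sum_set_minus_one_le_sum_pairs:
  fixes f :: "'a \<Rightarrow> real"
  assumes "distinct L" "\<And>i. i \<in> set L \<Longrightarrow> 0 \<le> f i \<and> f i \<le> 1"
  shows "(\<Sum>i\<in>set L. f i) - 1 \<le> (\<Sum>j<length L div 2. f (L ! (2 * j)) + f (L ! (2 * j + 1)))"
proof -
  let ?m = "length L div 2"
  have "(\<Sum>i\<in>set L. f i) = (\<Sum>i<length L. f (L ! i))"
    using sum.reindex_bij_betw[OF bij_betw_nth[OF assms(1) refl refl], of f]
    by (simp add: lessThan_atLeast0)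
  also have "\<dots> \<le> (\<Sum>i<2 * ?m. f (L ! i)) + 1"
  proof (cases "even (length L)")
    case False
    then have "length L = Suc (2 * ?m)" by presburger
    then have "(\<Sum>i<length L. f (L ! i)) = (\<Sum>i<2 * ?m. f (L ! i)) + f (L ! (2 * ?m))"
      by (metis sum.lessThan_Suc)
    then show ?thesis using assms(2)[of "L ! (2 * ?m)"] \<open>length L = Suc (2 * ?m)\<close> by simp
  qed (simp add: assms)
  also have "(\<Sum>i<2 * ?m. f (L ! i)) = (\<Sum>j<?m. f (L ! (2 * j)) + f (L ! (2 * j + 1)))"
    by (rule sum_lessThan_double_in_pairs)
  finally show ?thesis by simp
qed

lemma card_bad_pair_choices_le:
  fixes f :: "'a \<Rightarrow> real"
  assumes "distinct L" "\<And>i. i \<in> set L \<Longrightarrow> 0 \<le> f i \<and> f i \<le> 1"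
  shows "real (card {D \<in> Pow {..<length L div 2}. (\<Sum>i\<in>pair_choice L D. f i) \<le> t})
     \<le> 2 ^ (length L div 2) * exp (t - ((\<Sum>i\<in>set L. f i) - 1) / 4)"
proof -
  let ?m = "length L div 2"
  define a where "a j = f (L ! (2 * j))" for j
  define b where "b j = f (L ! (2 * j + 1))" for j
  have ab: "0 \<le> a j \<and> a j \<le> 1 \<and> 0 \<le> b j \<and> b j \<le> 1" if "j < ?m" for j
    using that assms(2)[OF nth_mem, of "2 * j"] assms(2)[OF nth_mem, of "2 * j + 1"]
    unfolding a_def b_def by auto
  have "{D \<in> Pow {..<?m}. (\<Sum>i\<in>pair_choice L D. f i) \<le> t}
      = {D \<in> Pow {..<?m}. (\<Sum>j<?m. if j \<in> D then b j else a j) \<le> t}"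
    unfolding a_def b_def by (simp only: sum_pair_choice[OF assms(1)])
  then have "real (card {D \<in> Pow {..<?m}. (\<Sum>i\<in>pair_choice L D. f i) \<le> t})
      \<le> 2 ^ ?m * exp (t - (\<Sum>j<?m. a j + b j) / 4)"
    using card_low_choice_sums_le[OF ab] by simp
  also have "\<dots> \<le> 2 ^ ?m * exp (t - ((\<Sum>i\<in>set L. f i) - 1) / 4)"
    using sum_set_minus_one_le_sum_pairs[of L f, OF assms] unfolding a_def b_def by simp
  finally show ?thesis .
qed

lemma exists_pair_choice_controlling_sums:
  fixes f :: "'k \<Rightarrow> 'a \<Rightarrow> real"
  assumes "distinct L" "finite K"
    and f01: "\<And>k i. k \<in> K \<Longrightarrow> i \<in> set L \<Longrightarrow> 0 \<le> f k i \<and> f k i \<le> 1"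
    and small: "real (card K) * exp (1/4 - t) < 1"
  shows "\<exists>D. \<forall>k\<in>K. (\<Sum>i\<in>pair_choice L D. f k i) \<le> t \<longrightarrow> (\<Sum>i\<in>set L. f k i) \<le> 8 * t"
proof -
  let ?m = "length L div 2"
  define Bad where "Bad k = {D \<in> Pow {..<?m}. (\<Sum>i\<in>pair_choice L D. f k i) \<le> t}" for k
  define K' where "K' = {k \<in> K. 8 * t < (\<Sum>i\<in>set L. f k i)}"
  have card_Bad: "real (card (Bad k)) \<le> 2 ^ ?m * exp (1/4 - t)" if "k \<in> K'" for k
  proof -
    have "real (card (Bad k)) \<le> 2 ^ ?m * exp (t - ((\<Sum>i\<in>set L. f k i) - 1) / 4)"
      unfolding Bad_def using that f01 by (intro card_bad_pair_choices_le assms(1)) (auto simp: K'_def)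
    also have "\<dots> \<le> 2 ^ ?m * exp (t - (8 * t - 1) / 4)"
      using that by (simp add: K'_def)
    also have "t - (8 * t - 1) / 4 = 1/4 - t" by (simp add: field_simps)
    finally show ?thesis .
  qed
  have "finite K'" using assms(2) by (simp add: K'_def)
  have "real (card (\<Union>k\<in>K'. Bad k)) \<le> (\<Sum>k\<in>K'. real (card (Bad k)))"
    using card_UN_le[OF \<open>finite K'\<close>, of Bad] of_nat_le_iff by (simp only: of_nat_sum[symmetric])
  also have "\<dots> \<le> (\<Sum>k\<in>K'. 2 ^ ?m * exp (1/4 - t))"
    by (rule sum_mono) (rule card_Bad)
  also have "\<dots> \<le> real (card K) * exp (1/4 - t) * 2 ^ ?m"
  proof -
    have "card K' \<le> card K" using card_mono[OF assms(2)] by (simp add: K'_def)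
    then show ?thesis by (simp add: mult_right_mono)
  qed
  also have "\<dots> < 2 ^ ?m" using small by simp
  finally have "card (\<Union>k\<in>K'. Bad k) < card (Pow {..<?m})"
    by (simp add: card_Pow)
  moreover have "finite (\<Union>k\<in>K'. Bad k)"
    by (rule finite_subset[of _ "Pow {..<?m}"]) (auto simp: Bad_def)
  ultimately have "\<not> Pow {..<?m} \<subseteq> (\<Union>k\<in>K'. Bad k)"
    using card_mono leD by blast
  then obtain D where D: "D \<in> Pow {..<?m}" "D \<notin> (\<Union>k\<in>K'. Bad k)" by blast
  have "(\<Sum>i\<in>set L. f k i) \<le> 8 * t"
    if "k \<in> K" "(\<Sum>i\<in>pair_choice L D. f k i) \<le> t" for k
  proof (rule ccontr)
    assume "\<not> (\<Sum>i\<in>set L. f k i) \<le> 8 * t"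
    then have "k \<in> K'" using that(1) by (simp add: K'_def)
    moreover have "D \<in> Bad k" using D(1) that(2) by (simp add: Bad_def)
    ultimately show False using D(2) by blast
  qed
  then show ?thesis by blast
qed

lemma exists_distinct_list_with_prefix:
  fixes I :: "'a::linorder set"
  assumes "finite I" "A \<subseteq> I"
  shows "\<exists>L. distinct L \<and> set L = I \<and> set (take (card A) L) = A"
proof (intro exI conjI)
  let ?L = "sorted_list_of_set A @ sorted_list_of_set (I - A)"
  have "finite A" using assms finite_subset by blast
  then show "distinct ?L" "set ?L = I" "set (take (card A) ?L) = A"
    using assms by auto
qed

lemma exists_half_subset_controlling_sums:
  fixes f :: "'k \<Rightarrow> 'a::linorder \<Rightarrow> real"
  assumes "finite I" "A \<subseteq> I" "finite K"
    and "\<And>k i. k \<in> K \<Longrightarrow> i \<in> I \<Longrightarrow> 0 \<le> f k i \<and> f k i \<le> 1"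
    and "real (card K) * exp (1/4 - t) < 1"
  shows "\<exists>Y\<subseteq>I. card Y = card I div 2 \<and> card A div 2 \<le> card (Y \<inter> A)
           \<and> (\<forall>k\<in>K. (\<Sum>i\<in>Y. f k i) \<le> t \<longrightarrow> (\<Sum>i\<in>I. f k i) \<le> 8 * t)"
proof -
  obtain L where L: "distinct L" "set L = I" "set (take (card A) L) = A"
    using exists_distinct_list_with_prefix[OF assms(1,2)] by blast
  have "length L = card I" using distinct_card[OF L(1)] L(2) by simp
  have "card A \<le> length L" using card_mono[OF assms(1,2)] \<open>length L = card I\<close> by simp
  obtain D where D: "\<forall>k\<in>K. (\<Sum>i\<in>pair_choice L D. f k i) \<le> t \<longrightarrow> (\<Sum>i\<in>set L. f k i) \<le> 8 * t"
    using exists_pair_choice_controlling_sums[OF L(1) assms(3) _ assms(5)] assms(4) L(2) by blast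
  show ?thesis
  proof (intro exI conjI)
    show "pair_choice L D \<subseteq> I" using pair_choice_subset[of L D] L(2) by simp
    show "card (pair_choice L D) = card I div 2"
      using card_pair_choice[OF L(1)] \<open>length L = card I\<close> by simp
    show "card A div 2 \<le> card (pair_choice L D \<inter> A)"
      using card_pair_choice_inter_take[OF L(1) \<open>card A \<le> length L\<close>, of D] L(3) by simp
  qed (use D L(2) in simp)
qed

lemma dist_int_nonneg: "0 \<le> dist_int x"
  by (simp add: dist_int_def)

lemma dist_int_le_half: "dist_int x \<le> 1 / 2"
  using of_int_round_abs_le[of x] by (simp add: dist_int_def abs_minus_commute)

lemma mult_exp_quarter_minus_lt_one:
  fixes x t :: real
  assumes "2 \<le> x" "4 * ln x \<le> t"
  shows "x * exp (1/4 - t) < 1"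
proof -
  have "x * exp (1/4 - t) \<le> x * exp (1/4 - 4 * ln x)"
    using assms by simp
  also have "\<dots> = exp (1/4) / x ^ 3"
  proof -
    have "4 * ln x = ln (x ^ 4)" using assms(1) by (simp add: ln_realpow)
    then have "exp (4 * ln x) = x ^ 4" using assms(1) by simp
    then show ?thesis using assms(1) by (simp add: exp_diff power_eq_if)
  qed
  also have "\<dots> \<le> exp 1 / 2 ^ 3"
    using assms(1) by (intro frac_le power_mono) auto
  also have "\<dots> < 1" using exp_le by simp
  finally show ?thesis .
qed

theorem lemma3p5:
  fixes p n :: nat and v :: "nat \<Rightarrow> nat"
  assumes "prime p"
    and "\<forall>i<n. v i < p"
    and "real (supp_size v {0..<n}) \<ge> 2^18 * ln (real p)"
  shows "\<exists>Y. Y \<subseteq> {0..<n} \<and> real n / 4 \<le> real (card Y) \<and> real (card Y) \<le> real n / 2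
           \<and> real (supp_size v Y) \<ge> real (supp_size v {0..<n}) / 4
           \<and> Tset p (real (supp_size v {0..<n}) / 2^16) v Y
               \<subseteq> Tset p (8 * (real (supp_size v {0..<n}) / 2^16)) v {0..<n}"
proof -
  define s where "s = supp_size v {0..<n}"
  define l where "l = real s / 2^16"
  define A where "A = {i \<in> {0..<n}. v i \<noteq> 0}"
  define f where "f k i = (dist_int (real (k * v i) / real p))\<^sup>2" for k i
  have "2 \<le> p" using assms(1) prime_ge_2_nat by blast
  then have "ln 2 \<le> ln (real p)" by simp
  then have "2 / 3 \<le> ln (real p)" using ln2_ge_two_thirds by linarith
  then have "2 \<le> s" using assms(3) unfolding s_def by (simp; linarith)
  have "card A = s" "A \<subseteq> {0..<n}" by (auto simp: A_def s_def supp_size_def)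
  then have "s \<le> n" using card_mono[of "{0..<n}" A] by simp
  have "0 \<le> f k i \<and> f k i \<le> 1" for k i
    using dist_int_nonneg dist_int_le_half[of "real (k * v i) / real p"]
    by (simp add: f_def power_le_one)
  moreover have "real p * exp (1/4 - l) < 1"
    using mult_exp_quarter_minus_lt_one \<open>2 \<le> p\<close> assms(3) by (simp add: l_def s_def)
  ultimately obtain Y where Y: "Y \<subseteq> {0..<n}" "card Y = n div 2" "s div 2 \<le> card (Y \<inter> A)"
    and sums: "\<forall>k\<in>{0..<p}. (\<Sum>i\<in>Y. f k i) \<le> l \<longrightarrow> (\<Sum>i\<in>{0..<n}. f k i) \<le> 8 * l"
    using exists_half_subset_controlling_sums[of "{0..<n}" A "{0..<p}" f l] \<open>A \<subseteq> {0..<n}\<close> \<open>card A = s\<close>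
    by auto
  have "card (Y \<inter> A) \<le> supp_size v Y"
    using finite_subset[OF Y(1)] unfolding supp_size_def A_def by (intro card_mono) auto
  show ?thesis
  proof (intro exI conjI)
    show "real n / 4 \<le> real (card Y)" "real (card Y) \<le> real n / 2"
      using Y(2) \<open>2 \<le> s\<close> \<open>s \<le> n\<close> by linarith+
    show "real (supp_size v {0..<n}) / 4 \<le> real (supp_size v Y)"
      using Y(3) \<open>card (Y \<inter> A) \<le> supp_size v Y\<close> \<open>2 \<le> s\<close> unfolding s_def by linarith
    show "Tset p (real (supp_size v {0..<n}) / 2^16) v Y
        \<subseteq> Tset p (8 * (real (supp_size v {0..<n}) / 2^16)) v {0..<n}"
      using sums unfolding s_def[symmetric] l_def[symmetric] by (auto simp: Tset_def f_def)
  qed (rule Y(1))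
qed

end
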